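(* Let $(X,\phi)$ be a ranked convex geometry and let $\Sigma$ be its critical base. For $j\in X$ let $\mathrm{pred}(j)=\{a\in X: \exists A\to j\in\Sigma,\ a\in A\}$. Let $j\in X$, $M\in j^{\nearrow}$ and $a\in X\setminus M$. Then $a\in\mathrm{pred}(j)$ if and only if $M\cup\{a,j\}$ is closed.
   Context: $X$ is finite. A closure operator $\phi$ on $X$ is extensive, monotone and idempotent; $(X,\phi)$ is standard if $\phi(\emptyset)=\emptyset$ and $\phi(\{x\})\setminus\{x\}$ is closed for all $x$. A unit implicational base $\Sigma$ (implications $A\to b$, $A\subseteq X$, $b\in X$) is an implicational base of $(X,\phi)$ if its closed sets (sets $S$ with $A\not\subseteq S$ or $b\in S$ for each $A\to b\in\Sigma$) are exactly the closed sets of $\phi$. $\Sigma$ is ranked if there is $\rho:X\to\mathbb{N}$ with $\rho(a)=\rho(b)+1$ whenever $A\to b\in\Sigma$ and $a\in A$. A ranked convex geometry is a standard closure space admitting a ranked implicational base (such bases are acyclic). $A$ is a minimal generator of $b$ if $b\in\phi(A)$ and $b\notin\phi(A\setminus\{x\})$ for all $x\in A$. The critical base is the unique irredundant implicational base (no implication can be removed without changing the closed sets) all of whose implications $A\to b$ have $A$ a minimal generator of $b$; it exists for acyclic convex geometries and is ranked for ranked ones. For $j\in X$, $j^{\nearrow}$ is the set of inclusion-maximal closed sets not containing $j$. *)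

theory Defs
  imports Main
begin

definition closure_operator :: "'a set \<Rightarrow> ('a set \<Rightarrow> 'a set) \<Rightarrow> bool" where
  "closure_operator X phi \<longleftrightarrow> finite X \<and>
     (\<forall>A. A \<subseteq> X \<longrightarrow> A \<subseteq> phi A \<and> phi A \<subseteq> X) \<and>
     (\<forall>A B. A \<subseteq> B \<and> B \<subseteq> X \<longrightarrow> phi A \<subseteq> phi B) \<and>
     (\<forall>A. A \<subseteq> X \<longrightarrow> phi (phi A) = phi A)"

definition is_closed :: "'a set \<Rightarrow> ('a set \<Rightarrow> 'a set) \<Rightarrow> 'a set \<Rightarrow> bool" where
  "is_closed X phi S \<longleftrightarrow> S \<subseteq> X \<and> phi S = S"

definition standard :: "'a set \<Rightarrow> ('a set \<Rightarrow> 'a set) \<Rightarrow> bool" where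
  "standard X phi \<longleftrightarrow> phi {} = {} \<and> (\<forall>x\<in>X. is_closed X phi (phi {x} - {x}))"

definition unit_base :: "'a set \<Rightarrow> ('a set \<times> 'a) set \<Rightarrow> bool" where
  "unit_base X \<Sigma> \<longleftrightarrow> (\<forall>(A, b)\<in>\<Sigma>. A \<subseteq> X \<and> b \<in> X)"

definition sigma_closed :: "'a set \<Rightarrow> ('a set \<times> 'a) set \<Rightarrow> 'a set \<Rightarrow> bool" where
  "sigma_closed X \<Sigma> S \<longleftrightarrow> S \<subseteq> X \<and> (\<forall>(A, b)\<in>\<Sigma>. \<not> A \<subseteq> S \<or> b \<in> S)"

definition implicational_base :: "'a set \<Rightarrow> ('a set \<Rightarrow> 'a set) \<Rightarrow> ('a set \<times> 'a) set \<Rightarrow> bool" where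
  "implicational_base X phi \<Sigma> \<longleftrightarrow> unit_base X \<Sigma> \<and>
     (\<forall>S. sigma_closed X \<Sigma> S \<longleftrightarrow> is_closed X phi S)"

definition ranked_base :: "('a set \<times> 'a) set \<Rightarrow> bool" where
  "ranked_base \<Sigma> \<longleftrightarrow> (\<exists>\<rho> :: 'a \<Rightarrow> nat. \<forall>(A, b)\<in>\<Sigma>. \<forall>a\<in>A. \<rho> a = \<rho> b + 1)"

definition ranked_convex_geometry :: "'a set \<Rightarrow> ('a set \<Rightarrow> 'a set) \<Rightarrow> bool" where
  "ranked_convex_geometry X phi \<longleftrightarrow> closure_operator X phi \<and> standard X phi \<and>
     (\<exists>\<Sigma>. implicational_base X phi \<Sigma> \<and> ranked_base \<Sigma>)"

definition minimal_generator :: "('a set \<Rightarrow> 'a set) \<Rightarrow> 'a set \<Rightarrow> 'a \<Rightarrow> bool" where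
  "minimal_generator phi A b \<longleftrightarrow> b \<in> phi A \<and> (\<forall>x\<in>A. b \<notin> phi (A - {x}))"

definition irredundant :: "'a set \<Rightarrow> ('a set \<times> 'a) set \<Rightarrow> bool" where
  "irredundant X \<Sigma> \<longleftrightarrow> (\<forall>i\<in>\<Sigma>. sigma_closed X (\<Sigma> - {i}) \<noteq> sigma_closed X \<Sigma>)"

definition critical_base :: "'a set \<Rightarrow> ('a set \<Rightarrow> 'a set) \<Rightarrow> ('a set \<times> 'a) set \<Rightarrow> bool" where
  "critical_base X phi \<Sigma> \<longleftrightarrow> implicational_base X phi \<Sigma> \<and> irredundant X \<Sigma> \<and>
     (\<forall>(A, b)\<in>\<Sigma>. minimal_generator phi A b)"

definition pred :: "('a set \<times> 'a) set \<Rightarrow> 'a \<Rightarrow> 'a set" where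
  "pred \<Sigma> j = {a. \<exists>A. (A, j) \<in> \<Sigma> \<and> a \<in> A}"

(* j^nearrow: inclusion-maximal closed sets not containing j *)
definition up_set :: "'a set \<Rightarrow> ('a set \<Rightarrow> 'a set) \<Rightarrow> 'a \<Rightarrow> 'a set set" where
  "up_set X phi j = {M. is_closed X phi M \<and> j \<notin> M \<and>
     (\<forall>M'. is_closed X phi M' \<and> j \<notin> M' \<and> M \<subseteq> M' \<longrightarrow> M' = M)}"

end

theory Submission
  imports Defs
begin

text \<open>
  Fix a ranked base \<open>\<Sigma>\<^sub>0\<close> with rank \<open>\<rho>\<close>. The critical base \<open>\<Sigma>\<close> is ranked by the same
  \<open>\<rho>\<close>. Its premises lie strictly above their conclusions, by irredundancy and minimality of generators.
  If \<open>A \<rightarrow> j\<close> in \<open>\<Sigma>\<close> had a premise \<open>a\<close> with \<open>\<rho> a > \<rho> j + 1\<close>, take \<open>S\<close> closed under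
  \<open>\<Sigma> - {A \<rightarrow> j}\<close> with \<open>A \<subseteq> S\<close>, \<open>j \<notin> S\<close> (irredundancy). Then \<open>S \<union> {x. \<rho> x \<le> \<rho> j}\<close> is closed,
  so it contains \<open>\<phi> A\<close> and with it the premise \<open>B\<close> of some \<open>B \<rightarrow> j\<close> in \<open>\<Sigma>\<^sub>0\<close>; having rank
  \<open>\<rho> j + 1\<close>, \<open>B \<subseteq> S\<close>. As \<open>\<phi> B\<close> has ranks at most \<open>\<rho> j + 1\<close>, it misses \<open>a\<close>, so \<open>S \<inter> \<phi> B\<close> is
  closed; it contains \<open>B\<close>, hence \<open>j\<close>, a contradiction.

  So for \<open>a \<in> pred j\<close> the closure of \<open>M \<union> {a}\<close> contains \<open>j\<close> by maximality of \<open>M\<close>, and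
  otherwise only elements \<open>x\<close> of rank at most \<open>\<rho> j\<close>; but then \<open>\<phi>(M \<union> {x})\<close> misses \<open>j\<close>,
  contradicting maximality again. Conversely, if \<open>M \<union> {a, j}\<close> is closed, an implication of \<open>\<Sigma>\<close>
  violated by \<open>M \<union> {a}\<close> must have \<open>a\<close> in its premise and conclusion \<open>j\<close>.
\<close>

lemma base_closedD:
  assumes "implicational_base X phi \<Sigma>" "is_closed X phi T" "(B, b) \<in> \<Sigma>" "B \<subseteq> T"
  shows "b \<in> T"
  using assms unfolding implicational_base_def sigma_closed_def by blast

lemma base_closedI:
  assumes "implicational_base X phi \<Sigma>" "T \<subseteq> X"
    and "\<And>B b. (B, b) \<in> \<Sigma> \<Longrightarrow> B \<subseteq> T \<Longrightarrow> b \<in> T"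
  shows "is_closed X phi T"
  using assms unfolding implicational_base_def sigma_closed_def by blast

lemma base_implication_in_ground:
  assumes "implicational_base X phi \<Sigma>" "(B, b) \<in> \<Sigma>"
  shows "B \<subseteq> X" "b \<in> X"
  using assms unfolding implicational_base_def unit_base_def by blast+

lemma irredundant_witness:
  assumes "irredundant X \<Sigma>" "(A, b) \<in> \<Sigma>"
  obtains S where "sigma_closed X (\<Sigma> - {(A, b)}) S" "A \<subseteq> S" "b \<notin> S"
proof -
  obtain S where "sigma_closed X (\<Sigma> - {(A, b)}) S \<noteq> sigma_closed X \<Sigma> S"
    using assms unfolding irredundant_def by blast
  then have "sigma_closed X (\<Sigma> - {(A, b)}) S" "A \<subseteq> S" "b \<notin> S"
    unfolding sigma_closed_def by blast+
  then show thesis by (rule that)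
qed

lemma irredundant_conclusion_notin_premise:
  assumes "irredundant X \<Sigma>" "(A, b) \<in> \<Sigma>"
  shows "b \<notin> A"
  using irredundant_witness[OF assms] by blast

lemma critical_baseD:
  assumes "critical_base X phi \<Sigma>"
  shows "implicational_base X phi \<Sigma>" "irredundant X \<Sigma>"
    and "(A, b) \<in> \<Sigma> \<Longrightarrow> minimal_generator phi A b"
  using assms unfolding critical_base_def by auto

lemma up_setD:
  assumes "M \<in> up_set X phi j"
  shows "is_closed X phi M" "j \<notin> M"
    and "is_closed X phi M' \<Longrightarrow> j \<notin> M' \<Longrightarrow> M \<subseteq> M' \<Longrightarrow> M' = M"
  using assms unfolding up_set_def by blast+

lemma pred_if_up_set_insert_closed:
  assumes base: "implicational_base X phi \<Sigma>"
    and M: "M \<in> up_set X phi j" and "a \<notin> M" "a \<noteq> j"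
    and closed: "is_closed X phi (M \<union> {a, j})"
  shows "a \<in> pred \<Sigma> j"
proof -
  note M_closed = up_setD(1)[OF M]
  have "\<not> is_closed X phi (insert a M)"
    using up_setD(2)[OF M] up_setD(3)[OF M, of "insert a M"] \<open>a \<notin> M\<close> \<open>a \<noteq> j\<close> by blast
  moreover have "insert a M \<subseteq> X"
    using closed unfolding is_closed_def by blast
  ultimately obtain B b where Bb: "(B, b) \<in> \<Sigma>" "B \<subseteq> insert a M" "b \<notin> insert a M"
    using base_closedI[OF base] by meson
  have "a \<in> B"
    using base_closedD[OF base M_closed Bb(1)] Bb(2,3) by blast
  moreover have "b = j"
    using base_closedD[OF base closed Bb(1)] Bb(2,3) by blast
  ultimately show ?thesis
    using Bb(1) unfolding pred_def by blast
qed

locale closure_space =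
  fixes X :: "'a set" and phi :: "'a set \<Rightarrow> 'a set"
  assumes closure_operator: "closure_operator X phi"
begin

lemma closure_extensive: "A \<subseteq> X \<Longrightarrow> A \<subseteq> phi A"
  using closure_operator unfolding closure_operator_def by simp

lemma closure_subset_ground: "A \<subseteq> X \<Longrightarrow> phi A \<subseteq> X"
  using closure_operator unfolding closure_operator_def by simp

lemma closure_mono: "A \<subseteq> B \<Longrightarrow> B \<subseteq> X \<Longrightarrow> phi A \<subseteq> phi B"
  using closure_operator unfolding closure_operator_def by simp

lemma closure_idem: "A \<subseteq> X \<Longrightarrow> phi (phi A) = phi A"
  using closure_operator unfolding closure_operator_def by simp

lemma is_closed_closure: "A \<subseteq> X \<Longrightarrow> is_closed X phi (phi A)"
  unfolding is_closed_def using closure_subset_ground closure_idem by simp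

lemma closure_least: "A \<subseteq> T \<Longrightarrow> is_closed X phi T \<Longrightarrow> phi A \<subseteq> T"
  unfolding is_closed_def using closure_mono by metis

lemma up_set_closure_insert:
  assumes M: "M \<in> up_set X phi j" and "x \<in> X" "x \<notin> M"
  shows "j \<in> phi (insert x M)"
proof (rule ccontr)
  assume "j \<notin> phi (insert x M)"
  have "insert x M \<subseteq> X"
    using up_setD(1)[OF M] \<open>x \<in> X\<close> unfolding is_closed_def by blast
  then have "phi (insert x M) = M"
    using up_setD(3)[OF M is_closed_closure \<open>j \<notin> phi (insert x M)\<close>] closure_extensive by blast
  then show False
    using closure_extensive[OF \<open>insert x M \<subseteq> X\<close>] \<open>x \<notin> M\<close> by blast
qed

lemma base_implication_into_closure:
  assumes base: "implicational_base X phi \<Sigma>" and "Y \<subseteq> X" "x \<in> phi Y" "x \<notin> Y"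
  obtains B where "(B, x) \<in> \<Sigma>" "B \<subseteq> phi Y"
proof (rule ccontr)
  assume no_implication: "\<not> thesis"
  have "is_closed X phi (phi Y - {x})"
  proof (rule base_closedI[OF base])
    show "phi Y - {x} \<subseteq> X"
      using closure_subset_ground[OF \<open>Y \<subseteq> X\<close>] by blast
    fix B b assume "(B, b) \<in> \<Sigma>" "B \<subseteq> phi Y - {x}"
    then show "b \<in> phi Y - {x}"
      using base_closedD[OF base is_closed_closure[OF \<open>Y \<subseteq> X\<close>]] no_implication that by blast
  qed
  moreover have "Y \<subseteq> phi Y - {x}"
    using closure_extensive[OF \<open>Y \<subseteq> X\<close>] \<open>x \<notin> Y\<close> by blast
  ultimately show False
    using closure_least \<open>x \<in> phi Y\<close> by blast
qed

end

locale ranked_closure_space = closure_space +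
  fixes \<Sigma>\<^sub>0 :: "('a set \<times> 'a) set" and \<rho> :: "'a \<Rightarrow> nat"
  assumes closure_empty: "phi {} = {}"
    and ranked_base: "implicational_base X phi \<Sigma>\<^sub>0"
    and rank: "\<And>B b x. (B, b) \<in> \<Sigma>\<^sub>0 \<Longrightarrow> x \<in> B \<Longrightarrow> \<rho> x = \<rho> b + 1"
begin

lemma closure_subset_rank_split:
  assumes "Y \<subseteq> X"
  shows "phi Y \<subseteq> phi {y \<in> Y. r < \<rho> y} \<union> Y \<union> {x \<in> X. \<rho> x < r}"
proof (rule closure_least)
  let ?Y = "{y \<in> Y. r < \<rho> y}"
  have "?Y \<subseteq> X" using assms by blast
  show "Y \<subseteq> phi ?Y \<union> Y \<union> {x \<in> X. \<rho> x < r}" by blast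
  show "is_closed X phi (phi ?Y \<union> Y \<union> {x \<in> X. \<rho> x < r})"
  proof (rule base_closedI[OF ranked_base])
    show "phi ?Y \<union> Y \<union> {x \<in> X. \<rho> x < r} \<subseteq> X"
      using closure_subset_ground[OF \<open>?Y \<subseteq> X\<close>] assms by blast
    fix B b assume Bb: "(B, b) \<in> \<Sigma>\<^sub>0" "B \<subseteq> phi ?Y \<union> Y \<union> {x \<in> X. \<rho> x < r}"
    show "b \<in> phi ?Y \<union> Y \<union> {x \<in> X. \<rho> x < r}"
    proof (cases "\<rho> b < r")
      case True
      then show ?thesis using base_implication_in_ground[OF ranked_base Bb(1)] by blast
    next
      case False
      then have "B \<subseteq> phi ?Y"
        using Bb rank[OF Bb(1)] closure_extensive[OF \<open>?Y \<subseteq> X\<close>] by fastforce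
      then show ?thesis
        using base_closedD[OF ranked_base is_closed_closure[OF \<open>?Y \<subseteq> X\<close>] Bb(1)] by blast
    qed
  qed
qed

lemma closure_rank_le:
  assumes "Y \<subseteq> X" "\<And>y. y \<in> Y \<Longrightarrow> \<rho> y \<le> k" "x \<in> phi Y"
  shows "\<rho> x \<le> k"
proof -
  have "{y \<in> Y. k < \<rho> y} = {}"
    using assms(2) by (simp add: not_less)
  then have "phi Y \<subseteq> Y \<union> {x \<in> X. \<rho> x < k}"
    using closure_subset_rank_split[OF assms(1), of k] closure_empty by (simp only:) blast
  then show ?thesis
    using assms(2,3) by fastforce
qed

lemma closure_insert_closed:
  assumes "is_closed X phi M" "y \<in> X"
  shows "phi (insert y M) \<subseteq> insert y M \<union> {x \<in> X. \<rho> x < \<rho> y}"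
proof -
  have "insert y M \<subseteq> X"
    using assms unfolding is_closed_def by blast
  moreover have "phi {z \<in> insert y M. \<rho> y < \<rho> z} \<subseteq> M"
    using assms(1) by (intro closure_least) auto
  ultimately show ?thesis
    using closure_subset_rank_split[of "insert y M" "\<rho> y"] by blast
qed

context
  fixes \<Sigma> :: "('a set \<times> 'a) set"
  assumes critical: "critical_base X phi \<Sigma>"
begin

lemma critical_implicational_base: "implicational_base X phi \<Sigma>"
  using critical_baseD(1)[OF critical] .

lemma critical_rank_less:
  assumes Cc: "(C, c) \<in> \<Sigma>" and "x \<in> C"
  shows "\<rho> c < \<rho> x"
proof (rule ccontr)
  assume "\<not> \<rho> c < \<rho> x"
  have generator: "minimal_generator phi C c"
    using critical_baseD(3)[OF critical Cc] .
  have "C \<subseteq> X"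
    using base_implication_in_ground[OF critical_implicational_base Cc] by blast
  have "c \<notin> C"
    using irredundant_conclusion_notin_premise[OF critical_baseD(2)[OF critical] Cc] .
  moreover have "c \<in> phi C"
    using generator unfolding minimal_generator_def by blast
  ultimately have "c \<in> phi {y \<in> C. \<rho> c < \<rho> y}"
    using closure_subset_rank_split[OF \<open>C \<subseteq> X\<close>, of "\<rho> c"] by auto
  also have "phi {y \<in> C. \<rho> c < \<rho> y} \<subseteq> phi (C - {x})"
    using \<open>\<not> \<rho> c < \<rho> x\<close> \<open>C \<subseteq> X\<close> by (intro closure_mono) auto
  finally show False
    using generator \<open>x \<in> C\<close> unfolding minimal_generator_def by blast
qed

lemma critical_rank:
  assumes Aj: "(A, j) \<in> \<Sigma>" and "a \<in> A"
  shows "\<rho> a = \<rho> j + 1"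
proof (rule ccontr)
  assume "\<rho> a \<noteq> \<rho> j + 1"
  then have "\<rho> j + 1 < \<rho> a"
    using critical_rank_less[OF Aj \<open>a \<in> A\<close>] by simp
  note base = critical_implicational_base
  obtain S where S: "sigma_closed X (\<Sigma> - {(A, j)}) S" "A \<subseteq> S" "j \<notin> S"
    using irredundant_witness[OF critical_baseD(2)[OF critical] Aj] .
  then have "S \<subseteq> X"
    unfolding sigma_closed_def by blast
  have S_closedD: "c \<in> S" if "(C, c) \<in> \<Sigma>" "C \<subseteq> S" "(C, c) \<noteq> (A, j)" for C c
    using S(1) that unfolding sigma_closed_def by blast
  have "A \<subseteq> X" "j \<in> phi A" "j \<notin> A"
    using base_implication_in_ground[OF base Aj] critical_baseD(3)[OF critical Aj]
      irredundant_conclusion_notin_premise[OF critical_baseD(2)[OF critical] Aj]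
    unfolding minimal_generator_def by blast+
  then obtain B where B: "(B, j) \<in> \<Sigma>\<^sub>0" "B \<subseteq> phi A"
    using base_implication_into_closure[OF ranked_base] by blast
  have "B \<subseteq> X"
    using base_implication_in_ground[OF ranked_base B(1)] by blast
  have "is_closed X phi (S \<union> {x \<in> X. \<rho> x \<le> \<rho> j})"
  proof (rule base_closedI[OF base])
    show "S \<union> {x \<in> X. \<rho> x \<le> \<rho> j} \<subseteq> X"
      using \<open>S \<subseteq> X\<close> by blast
    fix C c assume Cc: "(C, c) \<in> \<Sigma>" "C \<subseteq> S \<union> {x \<in> X. \<rho> x \<le> \<rho> j}"
    show "c \<in> S \<union> {x \<in> X. \<rho> x \<le> \<rho> j}"
    proof (cases "\<rho> c \<le> \<rho> j")
      case True
      then show ?thesis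
        using base_implication_in_ground[OF base Cc(1)] by blast
    next
      case False
      have "C \<subseteq> S"
      proof
        fix x assume "x \<in> C"
        then show "x \<in> S"
          using Cc(2) critical_rank_less[OF Cc(1) \<open>x \<in> C\<close>] False by auto
      qed
      then show ?thesis
        using S_closedD[OF Cc(1)] False by blast
    qed
  qed
  then have "phi A \<subseteq> S \<union> {x \<in> X. \<rho> x \<le> \<rho> j}"
    using \<open>A \<subseteq> S\<close> by (intro closure_least) auto
  then have "B \<subseteq> S"
    using B(2) rank[OF B(1)] by auto
  have "a \<notin> phi B"
    using closure_rank_le[OF \<open>B \<subseteq> X\<close>, of "\<rho> j + 1" a] rank[OF B(1)] \<open>\<rho> j + 1 < \<rho> a\<close>
    by auto
  have "is_closed X phi (S \<inter> phi B)"
  proof (rule base_closedI[OF base])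
    show "S \<inter> phi B \<subseteq> X"
      using \<open>S \<subseteq> X\<close> by blast
    fix C c assume Cc: "(C, c) \<in> \<Sigma>" "C \<subseteq> S \<inter> phi B"
    then have "(C, c) \<noteq> (A, j)"
      using \<open>a \<in> A\<close> \<open>a \<notin> phi B\<close> by blast
    then show "c \<in> S \<inter> phi B"
      using Cc S_closedD base_closedD[OF base is_closed_closure[OF \<open>B \<subseteq> X\<close>]] by blast
  qed
  then have "phi B \<subseteq> S \<inter> phi B"
    using \<open>B \<subseteq> S\<close> closure_extensive[OF \<open>B \<subseteq> X\<close>] by (intro closure_least) auto
  moreover have "j \<in> phi B"
    using base_closedD[OF ranked_base is_closed_closure[OF \<open>B \<subseteq> X\<close>] B(1)]
      closure_extensive[OF \<open>B \<subseteq> X\<close>] by blast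
  ultimately show False
    using \<open>j \<notin> S\<close> by blast
qed

end

lemma up_set_insert_closed:
  assumes M: "M \<in> up_set X phi j" and "a \<in> X" "a \<notin> M" and rank_a: "\<rho> a = \<rho> j + 1"
  shows "is_closed X phi (M \<union> {a, j})"
proof -
  have M_closed: "is_closed X phi M" and "j \<notin> M"
    using up_setD(1,2)[OF M] by blast+
  have "insert a M \<subseteq> X" using M_closed \<open>a \<in> X\<close> unfolding is_closed_def by blast
  have "phi (insert a M) \<subseteq> M \<union> {a, j}"
  proof
    fix x assume x: "x \<in> phi (insert a M)"
    show "x \<in> M \<union> {a, j}"
    proof (rule ccontr)
      assume "x \<notin> M \<union> {a, j}"
      then have "x \<in> X" "\<rho> x \<le> \<rho> j"
        using x closure_insert_closed[OF M_closed \<open>a \<in> X\<close>] rank_a by auto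
      moreover have "j \<in> phi (insert x M)"
        using up_set_closure_insert[OF M \<open>x \<in> X\<close>] \<open>x \<notin> M \<union> {a, j}\<close> by blast
      ultimately show False
        using closure_insert_closed[OF M_closed \<open>x \<in> X\<close>] \<open>j \<notin> M\<close> \<open>x \<notin> M \<union> {a, j}\<close> by auto
    qed
  qed
  moreover have "insert a M \<subseteq> phi (insert a M)" "j \<in> phi (insert a M)"
    using closure_extensive[OF \<open>insert a M \<subseteq> X\<close>] up_set_closure_insert[OF M \<open>a \<in> X\<close> \<open>a \<notin> M\<close>]
    by blast+
  ultimately have "phi (insert a M) = M \<union> {a, j}" by blast
  then show ?thesis using is_closed_closure[OF \<open>insert a M \<subseteq> X\<close>] by simp
qed

end

theorem lemma4:
  fixes X :: "'a set" and phi :: "'a set \<Rightarrow> 'a set" and \<Sigma> :: "('a set \<times> 'a) set"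
  assumes "ranked_convex_geometry X phi"
    and "critical_base X phi \<Sigma>"
    and "j \<in> X"
    and "M \<in> up_set X phi j"
    and "a \<in> X - M"
    and "a \<noteq> j"
  shows "a \<in> pred \<Sigma> j \<longleftrightarrow> is_closed X phi (M \<union> {a, j})"
proof -
  have "closure_operator X phi" "phi {} = {}"
    and "\<exists>\<Sigma>\<^sub>0. implicational_base X phi \<Sigma>\<^sub>0 \<and> ranked_base \<Sigma>\<^sub>0"
    using assms(1) unfolding ranked_convex_geometry_def standard_def by auto
  then obtain \<Sigma>\<^sub>0 and \<rho> :: "'a \<Rightarrow> nat" where "implicational_base X phi \<Sigma>\<^sub>0"
    and "\<forall>(B, b)\<in>\<Sigma>\<^sub>0. \<forall>x\<in>B. \<rho> x = \<rho> b + 1"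
    unfolding ranked_base_def by blast
  then interpret ranked_closure_space X phi \<Sigma>\<^sub>0 \<rho>
    using \<open>closure_operator X phi\<close> \<open>phi {} = {}\<close> by unfold_locales auto
  have "a \<in> X" "a \<notin> M"
    using assms(5) by auto
  show ?thesis
  proof
    assume "a \<in> pred \<Sigma> j"
    then obtain A where "(A, j) \<in> \<Sigma>" "a \<in> A"
      unfolding pred_def by blast
    then show "is_closed X phi (M \<union> {a, j})"
      using up_set_insert_closed[OF assms(4) \<open>a \<in> X\<close> \<open>a \<notin> M\<close>] critical_rank[OF assms(2)] by blast
  next
    assume "is_closed X phi (M \<union> {a, j})"
    then show "a \<in> pred \<Sigma> j"
      using pred_if_up_set_insert_closed[OF critical_baseD(1)[OF assms(2)] assms(4) \<open>a \<notin> M\<close> assms(6)]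
      by blast
  qed
qed

end
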